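(* Let $h\in\mathbb N$ and $P\in\mathcal C(h)$ be such that every hole is an axis-aligned rectangle. Then for every $s\in P$ there is a path in $P$ from $s$ to a point of $\partial P_0$ of length at most ${\rm diam}_2(P)$.
   Context: $\mathcal C(h)$ is the family of polygonal domains $P=P_0\setminus\bigcup_{i=1}^h\operatorname{int}(P_i)$ with $P_0$ a convex polygon and $P_1,\dots,P_h$ pairwise disjoint convex polygons (holes) in the interior of $P_0$; ${\rm diam}_2(P)=\sup_{s,t\in P}|st|$. *)

theory Defs
  imports "HOL-Analysis.Analysis"
begin

definition convex_polygon :: "(real \<times> real) set \<Rightarrow> bool" where
  "convex_polygon Q \<longleftrightarrow> (\<exists>V. finite V \<and> Q = convex hull V) \<and> interior Q \<noteq> {}"

definition axis_rectangle :: "(real \<times> real) set \<Rightarrow> bool" where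
  "axis_rectangle R \<longleftrightarrow> (\<exists>a b. R = cbox a b \<and> box a b \<noteq> {})"

definition in_class_C :: "nat \<Rightarrow> (real \<times> real) set \<Rightarrow> (nat \<Rightarrow> (real \<times> real) set) \<Rightarrow> bool" where
  "in_class_C h P0 H \<longleftrightarrow> convex_polygon P0
     \<and> (\<forall>i\<in>{1..h}. convex_polygon (H i) \<and> H i \<subseteq> interior P0)
     \<and> (\<forall>i\<in>{1..h}. \<forall>j\<in>{1..h}. i \<noteq> j \<longrightarrow> H i \<inter> H j = {})"

definition domain :: "nat \<Rightarrow> (real \<times> real) set \<Rightarrow> (nat \<Rightarrow> (real \<times> real) set) \<Rightarrow> (real \<times> real) set" where
  "domain h P0 H = P0 - (\<Union>i\<in>{1..h}. interior (H i))"

definition partition01 :: "real list \<Rightarrow> bool" where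
  "partition01 ts \<longleftrightarrow> ts \<noteq> [] \<and> sorted ts \<and> hd ts = 0 \<and> last ts = 1"

definition inscribed_length :: "(real \<Rightarrow> 'a::metric_space) \<Rightarrow> real list \<Rightarrow> real" where
  "inscribed_length g ts = (\<Sum>i<length ts - 1. dist (g (ts ! i)) (g (ts ! Suc i)))"

definition rectifiable_path :: "(real \<Rightarrow> 'a::real_normed_vector) \<Rightarrow> bool" where
  "rectifiable_path g \<longleftrightarrow> path g \<and> bdd_above {inscribed_length g ts | ts. partition01 ts}"

definition path_length :: "(real \<Rightarrow> 'a::real_normed_vector) \<Rightarrow> real" where
  "path_length g = (SUP ts\<in>{ts. partition01 ts}. inscribed_length g ts)"

end

theory Submission
  imports Defs
begin

text \<open>
  From a point of the domain, walk along a staircase that is monotone in both coordinates: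
  go straight up until either the boundary of \<open>P\<^sub>0\<close> is reached or the lowest hole directly
  above blocks the way, in which case go around that hole along its bottom and right edges to its
  upper right corner, and repeat. Each detour removes that hole from the holes whose upper right
  corner is strictly north-east of the current point, so the walk ends on \<open>\<partial>P\<^sub>0\<close>.
  A monotone path from \<open>s\<close> to \<open>t\<close> has length at most \<open>(t - s)\<^sub>x + (t - s)\<^sub>y\<close>.
  The same construction after reflecting the plane through the origin gives a path from \<open>s\<close>
  to a boundary point \<open>t'\<close> of length at most \<open>(s - t')\<^sub>x + (s - t')\<^sub>y\<close>. The two bounds add up
  to \<open>(t - t')\<^sub>x + (t - t')\<^sub>y \<le> 2 |t t'| \<le> 2 diam P\<close>, so one of the two paths is short enough.
\<close>

lemma partition01_nth_bounds:
  assumes "partition01 ts" "i < length ts"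
  shows "0 \<le> ts ! i" "ts ! i \<le> 1"
proof -
  have "ts \<noteq> []" "sorted ts" "hd ts = 0" "last ts = 1"
    using assms(1) unfolding partition01_def by auto
  then show "0 \<le> ts ! i" "ts ! i \<le> 1"
    using assms(2) sorted_nth_mono[of ts 0 i] sorted_nth_mono[of ts i "length ts - 1"]
    by (simp_all add: hd_conv_nth last_conv_nth)
qed

lemma inscribed_length_mono_on_le:
  fixes g :: "real \<Rightarrow> 'a::ordered_euclidean_space"
  assumes mono: "mono_on {0..1} g" and ts: "partition01 ts"
  shows "inscribed_length g ts \<le> (\<Sum>b\<in>Basis. (g 1 - g 0) \<bullet> b)"
proof -
  define f where "f i = (\<Sum>b\<in>Basis. g (ts ! i) \<bullet> b)" for i
  have "dist (g (ts ! i)) (g (ts ! Suc i)) \<le> f (Suc i) - f i" if "i < length ts - 1" for i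
  proof -
    have "ts ! i \<le> ts ! Suc i"
      using ts that by (simp add: partition01_def sorted_nth_mono)
    then have "g (ts ! i) \<le> g (ts ! Suc i)"
      using that partition01_nth_bounds[OF ts] by (intro mono_onD[OF mono]) auto
    then have "\<bar>(g (ts ! Suc i) - g (ts ! i)) \<bullet> b\<bar> = (g (ts ! Suc i) - g (ts ! i)) \<bullet> b"
      if "b \<in> Basis" for b
      using that by (simp add: eucl_le[where 'a='a] inner_diff_left)
    then have "norm (g (ts ! Suc i) - g (ts ! i)) \<le> (\<Sum>b\<in>Basis. (g (ts ! Suc i) - g (ts ! i)) \<bullet> b)"
      using norm_le_l1[of "g (ts ! Suc i) - g (ts ! i)"] by simp
    then show ?thesis
      by (simp add: f_def dist_norm norm_minus_commute inner_diff_left sum_subtractf)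
  qed
  then have "inscribed_length g ts \<le> (\<Sum>i<length ts - 1. f (Suc i) - f i)"
    unfolding inscribed_length_def by (intro sum_mono) auto
  also have "\<dots> = f (length ts - 1) - f 0"
    by (rule sum_lessThan_telescope)
  also have "\<dots> = (\<Sum>b\<in>Basis. (g 1 - g 0) \<bullet> b)"
  proof -
    have "ts ! 0 = 0" "ts ! (length ts - 1) = 1"
      using ts by (auto simp: partition01_def hd_conv_nth last_conv_nth)
    then show ?thesis by (simp add: f_def inner_diff_left sum_subtractf)
  qed
  finally show ?thesis .
qed

lemma
  fixes g :: "real \<Rightarrow> 'a::ordered_euclidean_space"
  assumes "path g" "mono_on {0..1} g"
  shows rectifiable_path_mono_on: "rectifiable_path g"
    and path_length_mono_on_le: "path_length g \<le> (\<Sum>b\<in>Basis. (g 1 - g 0) \<bullet> b)"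
proof -
  have "partition01 [0, 1]"
    by (simp add: partition01_def)
  then show "rectifiable_path g" "path_length g \<le> (\<Sum>b\<in>Basis. (g 1 - g 0) \<bullet> b)"
    using assms inscribed_length_mono_on_le[OF assms(2)]
    unfolding rectifiable_path_def path_length_def bdd_above_def
    by (auto intro!: cSUP_least)
qed

lemma
  fixes g :: "real \<Rightarrow> 'a::real_normed_vector"
  shows rectifiable_path_uminus: "rectifiable_path (uminus \<circ> g) \<longleftrightarrow> rectifiable_path g"
    and path_length_uminus: "path_length (uminus \<circ> g) = path_length g"
proof -
  have "inscribed_length (uminus \<circ> g) = inscribed_length g"
    by (simp add: fun_eq_iff inscribed_length_def dist_minus)
  moreover have "path (uminus \<circ> g) \<longleftrightarrow> path g"
    using path_continuous_image[of g uminus] path_continuous_image[of "uminus \<circ> g" uminus]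
    by (auto simp: o_def continuous_on_minus continuous_on_id)
  ultimately show "rectifiable_path (uminus \<circ> g) \<longleftrightarrow> rectifiable_path g"
    "path_length (uminus \<circ> g) = path_length g"
    by (simp_all add: rectifiable_path_def path_length_def)
qed

lemma sum_Basis_inner_le_DIM_norm: "(\<Sum>b\<in>Basis. x \<bullet> b) \<le> DIM('a) * norm (x :: 'a::euclidean_space)"
proof -
  have "(\<Sum>b\<in>Basis. x \<bullet> b) \<le> (\<Sum>b\<in>(Basis::'a set). norm x)"
    by (intro sum_mono order_trans[OF abs_ge_self Basis_le_norm])
  then show ?thesis by simp
qed

lemma mono_on_linepath:
  fixes a b :: "'a::ordered_euclidean_space"
  assumes "a \<le> b"
  shows "mono_on {0..1} (linepath a b)"
proof (rule mono_onI)
  fix s t :: real assume "s \<in> {0..1}" "t \<in> {0..1}" "s \<le> t"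
  then have "(t - s) * (a \<bullet> i) \<le> (t - s) * (b \<bullet> i)" if "i \<in> Basis" for i
    using assms that by (intro mult_left_mono) (auto simp: eucl_le[where 'a='a])
  then show "linepath a b s \<le> linepath a b t"
    by (simp add: eucl_le[where 'a='a] linepath_def inner_add_left algebra_simps)
qed

lemma mono_on_joinpaths:
  fixes g1 g2 :: "real \<Rightarrow> 'a::ordered_euclidean_space"
  assumes "mono_on {0..1} g1" "mono_on {0..1} g2" "pathfinish g1 = pathstart g2"
  shows "mono_on {0..1} (g1 +++ g2)"
proof (rule mono_onI)
  fix s t :: real assume st: "s \<in> {0..1}" "t \<in> {0..1}" "s \<le> t"
  consider "t \<le> 1/2" | "s \<le> 1/2" "\<not> t \<le> 1/2" | "\<not> s \<le> 1/2"
    by linarith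
  then show "(g1 +++ g2) s \<le> (g1 +++ g2) t"
  proof cases
    case 1
    then show ?thesis using st by (auto simp: joinpaths_def intro: mono_onD[OF assms(1)])
  next
    case 2
    then have "g1 (2 * s) \<le> g1 1" "g2 0 \<le> g2 (2 * t - 1)"
      using st by (auto intro: mono_onD[OF assms(1)] mono_onD[OF assms(2)])
    then show ?thesis
      using 2 assms(3) by (auto simp: joinpaths_def pathfinish_def pathstart_def)
  next
    case 3
    then show ?thesis using st by (auto simp: joinpaths_def intro: mono_onD[OF assms(2)])
  qed
qed

definition monotone_path_in :: "'a::ordered_euclidean_space set \<Rightarrow> 'a \<Rightarrow> 'a \<Rightarrow> bool" where
  "monotone_path_in S p q \<longleftrightarrow>
     (\<exists>g. path g \<and> path_image g \<subseteq> S \<and> pathstart g = p \<and> pathfinish g = q \<and> mono_on {0..1} g)"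

lemma monotone_path_in_linepath:
  "p \<le> q \<Longrightarrow> closed_segment p q \<subseteq> S \<Longrightarrow> monotone_path_in S p q"
  unfolding monotone_path_in_def by (intro exI[of _ "linepath p q"]) (simp add: mono_on_linepath)

lemma monotone_path_in_refl: "p \<in> S \<Longrightarrow> monotone_path_in S p p"
  by (simp add: monotone_path_in_linepath)

lemma monotone_path_in_trans:
  assumes "monotone_path_in S p q" "monotone_path_in S q r"
  shows "monotone_path_in S p r"
proof -
  obtain g1 g2 where "path g1" "path_image g1 \<subseteq> S" "pathstart g1 = p" "pathfinish g1 = q"
      "mono_on {0..1} g1" "path g2" "path_image g2 \<subseteq> S" "pathstart g2 = q" "pathfinish g2 = r"
      "mono_on {0..1} g2"
    using assms unfolding monotone_path_in_def by blast
  then show ?thesis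
    unfolding monotone_path_in_def
    by (intro exI[of _ "g1 +++ g2"]) (simp add: mono_on_joinpaths path_image_join)
qed

lemma monotone_path_in_le: "monotone_path_in S p q \<Longrightarrow> p \<le> q"
  unfolding monotone_path_in_def pathstart_def pathfinish_def by (force intro: mono_onD)

lemma monotone_path_in_length:
  assumes "monotone_path_in S p q"
  shows "\<exists>g. rectifiable_path g \<and> path_image g \<subseteq> S \<and> pathstart g = p \<and> pathfinish g = q
             \<and> path_length g \<le> (\<Sum>b\<in>Basis. (q - p) \<bullet> b)"
  using assms rectifiable_path_mono_on path_length_mono_on_le
  unfolding monotone_path_in_def pathstart_def pathfinish_def by metis

lemma monotone_path_in_uminus_length:
  assumes "monotone_path_in (uminus ` S) (- p) (- q)"
  shows "\<exists>g. rectifiable_path g \<and> path_image g \<subseteq> S \<and> pathstart g = p \<and> pathfinish g = q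
             \<and> path_length g \<le> (\<Sum>b\<in>Basis. (p - q) \<bullet> b)"
proof -
  obtain g where g: "rectifiable_path g" "path_image g \<subseteq> uminus ` S" "pathstart g = - p"
      "pathfinish g = - q" "path_length g \<le> (\<Sum>b\<in>Basis. (p - q) \<bullet> b)"
    using monotone_path_in_length[OF assms] by auto
  have "path_image (uminus \<circ> g) \<subseteq> S"
    using g(2) by (auto simp: path_image_compose)
  then show ?thesis
    using g by (intro exI[of _ "uminus \<circ> g"])
      (simp add: rectifiable_path_uminus path_length_uminus pathstart_compose pathfinish_compose)
qed

lemma frontier_negations:
  fixes S :: "'a::euclidean_space set"
  shows "frontier (uminus ` S) = uminus ` frontier S"
  by (simp add: frontier_def interior_negations image_set_diff linear_uminus
      flip: closure_injective_linear_image)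

lemma closed_segment_fst_snd:
  assumes "z \<in> closed_segment a b"
  shows "fst z \<in> closed_segment (fst a) (fst b)" "snd z \<in> closed_segment (snd a) (snd b)"
  using assms closed_segment_PairD[of "fst z" "snd z" "fst a" "snd a" "fst b" "snd b"] by simp_all

lemma mem_box_real_prod:
  "z \<in> box a b \<longleftrightarrow> fst a < fst z \<and> fst z < fst b \<and> snd a < snd z \<and> snd z < snd (b :: real \<times> real)"
  by (auto simp: mem_box Basis_prod_def inner_prod_def)

lemma box_nonempty_real_prod: "box a b \<noteq> {} \<longleftrightarrow> fst a < fst b \<and> snd a < snd (b :: real \<times> real)"
  by (auto simp: box_ne_empty Basis_prod_def inner_prod_def)

lemma mem_cbox_real_prod:
  "z \<in> cbox a b \<longleftrightarrow> fst a \<le> fst z \<and> fst z \<le> fst b \<and> snd a \<le> snd z \<and> snd z \<le> snd (b :: real \<times> real)"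
  by (auto simp: mem_box Basis_prod_def inner_prod_def)

locale rectangular_holes =
  fixes K :: "(real \<times> real) set" and I :: "'i set" and lo hi :: "'i \<Rightarrow> real \<times> real"
  assumes convex_K: "convex K" and compact_K: "compact K" and finite_I: "finite I"
    and box_nonempty: "i \<in> I \<Longrightarrow> box (lo i) (hi i) \<noteq> {}"
    and hole_subset: "i \<in> I \<Longrightarrow> cbox (lo i) (hi i) \<subseteq> K"
    and holes_disjoint: "disjoint_family_on (\<lambda>i. cbox (lo i) (hi i)) I"
begin

definition free_space :: "(real \<times> real) set" where
  "free_space = K - (\<Union>i\<in>I. box (lo i) (hi i))"

definition holes_above :: "real \<times> real \<Rightarrow> 'i set" where
  "holes_above p = {i \<in> I. fst (lo i) < fst p \<and> fst p < fst (hi i) \<and> snd p \<le> snd (lo i)}"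

definition holes_ahead :: "real \<times> real \<Rightarrow> 'i set" where
  "holes_ahead p = {i \<in> I. fst p < fst (hi i) \<and> snd p < snd (hi i)}"

lemma lo_less_hi: "i \<in> I \<Longrightarrow> fst (lo i) < fst (hi i) \<and> snd (lo i) < snd (hi i)"
  using box_nonempty box_nonempty_real_prod by blast

lemma hole_boundary_subset_free_space:
  assumes "i \<in> I"
  shows "cbox (lo i) (hi i) - box (lo i) (hi i) \<subseteq> free_space"
proof -
  have "cbox (lo i) (hi i) \<inter> box (lo j) (hi j) = {}" if "j \<in> I" "j \<noteq> i" for j
    using holes_disjoint assms that box_subset_cbox unfolding disjoint_family_on_def by blast
  then show ?thesis
    using hole_subset[OF assms] unfolding free_space_def by blast
qed

lemma vertical_segment_subset_free_space:
  assumes p: "p \<in> free_space" and y: "snd p \<le> y" "(fst p, y) \<in> K"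
    and unblocked: "\<And>i. i \<in> holes_above p \<Longrightarrow> y \<le> snd (lo i)"
  shows "closed_segment p (fst p, y) \<subseteq> free_space"
proof
  fix z assume z: "z \<in> closed_segment p (fst p, y)"
  have "fst z = fst p" "snd p \<le> snd z" "snd z \<le> y"
    using closed_segment_fst_snd[OF z] y(1) by (simp_all add: closed_segment_eq_real_ivl)
  moreover have "z \<in> K"
    using z p y(2) convex_K unfolding free_space_def by (meson DiffD1 closed_segment_subset subsetD)
  moreover have "z \<notin> box (lo i) (hi i)" if "i \<in> I" for i
  proof
    assume "z \<in> box (lo i) (hi i)"
    moreover have "p \<notin> box (lo i) (hi i)"
      using p that unfolding free_space_def by blast
    ultimately have "i \<in> holes_above p"
      using that \<open>fst z = fst p\<close> \<open>snd p \<le> snd z\<close>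
      by (auto simp: holes_above_def mem_box_real_prod)
    then show False
      using unblocked \<open>z \<in> box (lo i) (hi i)\<close> \<open>snd z \<le> y\<close> by (force simp: mem_box_real_prod)
  qed
  ultimately show "z \<in> free_space"
    unfolding free_space_def by blast
qed

lemma monotone_path_upwards_to_frontier:
  assumes p: "p \<in> free_space" "p \<in> interior K" and unblocked: "holes_above p = {}"
  shows "\<exists>q\<in>frontier K. monotone_path_in free_space p q"
proof -
  obtain d where d: "0 < d" "p + d *\<^sub>R (0, 1) \<in> frontier K"
    using ray_to_frontier[OF compact_imp_bounded[OF compact_K] p(2), of "(0, 1)"]
    by (auto simp: zero_prod_def)
  define q where "q = p + d *\<^sub>R (0, 1)"
  have q: "q = (fst p, snd p + d)"
    by (cases p) (simp add: q_def)
  have "q \<in> K"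
    using d compact_K compact_imp_closed frontier_subset_closed unfolding q_def by blast
  then have "closed_segment p q \<subseteq> free_space"
    unfolding q using p d unblocked by (intro vertical_segment_subset_free_space) auto
  moreover have "p \<le> q"
    using d by (simp add: q less_eq_prod_def)
  ultimately show ?thesis
    using d q_def monotone_path_in_linepath by blast
qed

lemma monotone_path_around_lowest_hole_above:
  assumes p: "p \<in> free_space" and i: "i \<in> holes_above p"
    and lowest: "\<And>j. j \<in> holes_above p \<Longrightarrow> snd (lo i) \<le> snd (lo j)"
  shows "monotone_path_in free_space p (hi i)"
proof -
  define q1 q2 where "q1 = (fst p, snd (lo i))" and "q2 = (fst (hi i), snd (lo i))"
  have iI: "i \<in> I" and below: "fst (lo i) < fst p" "fst p < fst (hi i)" "snd p \<le> snd (lo i)"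
    using i by (auto simp: holes_above_def)
  have corners: "q1 \<in> cbox (lo i) (hi i)" "q2 \<in> cbox (lo i) (hi i)" "hi i \<in> cbox (lo i) (hi i)"
    using below lo_less_hi[OF iI] by (auto simp: q1_def q2_def mem_cbox_real_prod)
  have "closed_segment p q1 \<subseteq> free_space"
    unfolding q1_def using p below hole_subset[OF iI] corners lowest
    by (intro vertical_segment_subset_free_space) (auto simp: q1_def)
  moreover have "closed_segment q1 q2 \<subseteq> free_space" "closed_segment q2 (hi i) \<subseteq> free_space"
  proof -
    have "closed_segment q1 q2 \<subseteq> cbox (lo i) (hi i)" "closed_segment q2 (hi i) \<subseteq> cbox (lo i) (hi i)"
      using corners by (simp_all add: closed_segment_subset)
    moreover have "closed_segment q1 q2 \<inter> box (lo i) (hi i) = {}"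
      using closed_segment_fst_snd(2)[of _ q1 q2] by (force simp: q1_def q2_def mem_box_real_prod)
    moreover have "closed_segment q2 (hi i) \<inter> box (lo i) (hi i) = {}"
      using closed_segment_fst_snd(1)[of _ q2 "hi i"] by (force simp: q2_def mem_box_real_prod)
    ultimately show "closed_segment q1 q2 \<subseteq> free_space" "closed_segment q2 (hi i) \<subseteq> free_space"
      using hole_boundary_subset_free_space[OF iI] by blast+
  qed
  moreover have "p \<le> q1" "q1 \<le> q2" "q2 \<le> hi i"
    using below lo_less_hi[OF iI] by (auto simp: q1_def q2_def less_eq_prod_def)
  ultimately show ?thesis
    by (meson monotone_path_in_linepath monotone_path_in_trans)
qed

lemma monotone_path_to_corner_of_hole_above:
  assumes p: "p \<in> free_space" and above: "holes_above p \<noteq> {}"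
  obtains i where "i \<in> holes_ahead p" "hi i \<in> free_space" "monotone_path_in free_space p (hi i)"
proof -
  define i where "i = arg_min_on (\<lambda>j. snd (lo j)) (holes_above p)"
  have "finite (holes_above p)"
    using finite_I by (simp add: holes_above_def)
  then have i: "i \<in> holes_above p" "\<And>j. j \<in> holes_above p \<Longrightarrow> snd (lo i) \<le> snd (lo j)"
    using arg_min_if_finite[OF _ above, of "\<lambda>j. snd (lo j)"] unfolding i_def
    by (auto simp: not_less)
  then have iI: "i \<in> I"
    by (simp add: holes_above_def)
  have "i \<in> holes_ahead p"
    using i(1) lo_less_hi[OF iI] by (auto simp: holes_above_def holes_ahead_def)
  moreover have "hi i \<in> free_space"
    using hole_boundary_subset_free_space[OF iI] lo_less_hi[OF iI]
    by (auto simp: mem_box_real_prod mem_cbox_real_prod)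
  ultimately show ?thesis
    using that monotone_path_around_lowest_hole_above[OF p i] by blast
qed

lemma holes_ahead_psubset:
  assumes "p \<le> hi i" "i \<in> holes_ahead p"
  shows "holes_ahead (hi i) \<subset> holes_ahead p"
  using assms by (fastforce simp: holes_ahead_def less_eq_prod_def)

lemma monotone_path_to_frontier:
  assumes "p \<in> free_space"
  shows "\<exists>q\<in>frontier K. monotone_path_in free_space p q"
  using assms
proof (induction "card (holes_ahead p)" arbitrary: p rule: less_induct)
  case less
  consider "p \<notin> interior K" | "p \<in> interior K" "holes_above p = {}"
    | "p \<in> interior K" "holes_above p \<noteq> {}"
    by blast
  then show ?case
  proof cases
    case 1
    then have "p \<in> frontier K"
      using less.prems closure_subset unfolding free_space_def frontier_def by blast
    then show ?thesis
      using less.prems monotone_path_in_refl by blast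
  next
    case 2
    then show ?thesis
      using less.prems monotone_path_upwards_to_frontier by blast
  next
    case 3
    then obtain i where i: "i \<in> holes_ahead p" "hi i \<in> free_space"
        and step: "monotone_path_in free_space p (hi i)"
      using less.prems monotone_path_to_corner_of_hole_above by blast
    have "card (holes_ahead (hi i)) < card (holes_ahead p)"
      using holes_ahead_psubset[OF monotone_path_in_le[OF step] i(1)] finite_I
      by (simp add: holes_ahead_def psubset_card_mono)
    then obtain q where "q \<in> frontier K" "monotone_path_in free_space (hi i) q"
      using less.hyps i(2) by blast
    then show ?thesis
      using step monotone_path_in_trans by blast
  qed
qed

lemma rectangular_holes_reflected: "rectangular_holes (uminus ` K) I (\<lambda>i. - hi i) (\<lambda>i. - lo i)"
proof
  show "convex (uminus ` K)" "compact (uminus ` K)" "finite I"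
    using convex_K compact_K finite_I by (simp_all add: convex_negations compact_negations)
  show "box (- hi i) (- lo i) \<noteq> {}" if "i \<in> I" for i
    using lo_less_hi[OF that] by (simp add: box_nonempty_real_prod)
  show "cbox (- hi i) (- lo i) \<subseteq> uminus ` K" if "i \<in> I" for i
    using hole_subset[OF that] by (auto simp flip: uminus_interval_vector)
  show "disjoint_family_on (\<lambda>i. cbox (- hi i) (- lo i)) I"
    using holes_disjoint
    by (simp add: disjoint_family_on_def flip: uminus_interval_vector image_Int[OF inj_uminus])
qed

lemma free_space_reflected:
  "rectangular_holes.free_space (uminus ` K) I (\<lambda>i. - hi i) (\<lambda>i. - lo i) = uminus ` free_space"
proof -
  have "uminus ` box (lo i) (hi i) = box (- hi i) (- lo i)" for i
    by (auto simp: mem_box_real_prod intro!: image_eqI[where x = "- z" for z])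
  then show ?thesis
    unfolding rectangular_holes.free_space_def[OF rectangular_holes_reflected] free_space_def
    by (simp add: image_set_diff image_UN)
qed

lemma short_path_to_frontier:
  assumes p: "p \<in> free_space"
  shows "\<exists>g. rectifiable_path g \<and> path_image g \<subseteq> free_space \<and> pathstart g = p
             \<and> pathfinish g \<in> frontier K \<and> path_length g \<le> diameter free_space"
proof -
  interpret reflected: rectangular_holes "uminus ` K" I "\<lambda>i. - hi i" "\<lambda>i. - lo i"
    by (rule rectangular_holes_reflected)
  obtain t1 where t1: "t1 \<in> frontier K" "monotone_path_in free_space p t1"
    using monotone_path_to_frontier[OF p] by blast
  obtain t2 where t2: "t2 \<in> frontier K" "monotone_path_in (uminus ` free_space) (- p) (- t2)"
    using reflected.monotone_path_to_frontier[of "- p"] p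
    by (auto simp: free_space_reflected frontier_negations)
  obtain g1 where g1: "rectifiable_path g1" "path_image g1 \<subseteq> free_space" "pathstart g1 = p"
      "pathfinish g1 = t1" "path_length g1 \<le> (\<Sum>b\<in>Basis. (t1 - p) \<bullet> b)"
    using monotone_path_in_length[OF t1(2)] by blast
  obtain g2 where g2: "rectifiable_path g2" "path_image g2 \<subseteq> free_space" "pathstart g2 = p"
      "pathfinish g2 = t2" "path_length g2 \<le> (\<Sum>b\<in>Basis. (p - t2) \<bullet> b)"
    using monotone_path_in_uminus_length[OF t2(2)] by blast
  have "t1 \<in> free_space" "t2 \<in> free_space"
    using g1 g2 pathfinish_in_path_image by blast+
  moreover have "bounded free_space"
    using compact_K bounded_subset compact_imp_bounded unfolding free_space_def by blast
  ultimately have "dist t1 t2 \<le> diameter free_space"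
    by (rule diameter_bounded_bound[rotated])
  moreover have "(\<Sum>b\<in>Basis. (t1 - p) \<bullet> b) + (\<Sum>b\<in>Basis. (p - t2) \<bullet> b) \<le> 2 * dist t1 t2"
    using sum_Basis_inner_le_DIM_norm[of "t1 - t2"]
    by (simp add: dist_norm inner_diff_left sum_subtractf)
  ultimately have "path_length g1 \<le> diameter free_space \<or> path_length g2 \<le> diameter free_space"
    using g1(5) g2(5) by linarith
  then show ?thesis
    using g1 g2 t1(1) t2(1) by blast
qed

end

theorem proposition3:
  fixes h :: nat and P0 :: "(real \<times> real) set" and H :: "nat \<Rightarrow> (real \<times> real) set"
  assumes "in_class_C h P0 H"
    and "\<forall>i\<in>{1..h}. axis_rectangle (H i)"
    and "s \<in> domain h P0 H"
  shows "\<exists>g. rectifiable_path g \<and> path_image g \<subseteq> domain h P0 H \<and> pathstart g = s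
             \<and> pathfinish g \<in> frontier P0 \<and> path_length g \<le> diameter (domain h P0 H)"
proof -
  obtain lo hi where H: "\<And>i. i \<in> {1..h} \<Longrightarrow> H i = cbox (lo i) (hi i) \<and> box (lo i) (hi i) \<noteq> {}"
    using assms(2) unfolding axis_rectangle_def by metis
  obtain V where "finite V" "P0 = convex hull V"
    using assms(1) unfolding in_class_C_def convex_polygon_def by blast
  interpret rectangular_holes P0 "{1..h}" lo hi
  proof
    show "convex P0" "compact P0" "finite {1..h}"
      using \<open>finite V\<close> \<open>P0 = convex hull V\<close>
      by (simp_all add: convex_convex_hull compact_convex_hull finite_imp_compact)
    show "cbox (lo i) (hi i) \<subseteq> P0" if "i \<in> {1..h}" for i
      using assms(1) H[OF that] that interior_subset unfolding in_class_C_def by blast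
    show "disjoint_family_on (\<lambda>i. cbox (lo i) (hi i)) {1..h}"
      using assms(1) H unfolding in_class_C_def disjoint_family_on_def by metis
  qed (use H in blast)
  have "domain h P0 H = free_space"
    unfolding domain_def free_space_def using H by simp
  then show ?thesis
    using short_path_to_frontier assms(3) by simp
qed

end
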